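(* Let $G=K_n$ with $n\ge2$, and let $L$ be a list-assignment with $|L(v)|\ge\deg(v)+1=n$ for all $v\in V(G)$. If $\left|\bigcup_{v\in V(G)}L(v)\right|=n$, then all lists are identical and every $L$-colouring of $G$ is frozen. Otherwise, $\alpha\sim\beta$ for all $L$-colourings $\alpha,\beta$, and in fact $\mathrm{dist}_{\mathcal{C}(G,L)}(\alpha,\beta)\le 3n/2+2$.
   Context: An $L$-colouring is a proper colouring $\varphi$ with $\varphi(v)\in L(v)$ for all $v$. A vertex $v$ is frozen under $\varphi$ if every colour of $L(v)\setminus\{\varphi(v)\}$ appears on a neighbour of $v$; a colouring is frozen if all its vertices are frozen. $\mathcal{C}(G,L)$ is the graph whose vertices are the $L$-colourings, adjacent when they differ by a single-vertex recolouring (keeping the colouring a proper $L$-colouring); $\alpha\sim\beta$ means $\alpha$ and $\beta$ lie in the same component of $\mathcal{C}(G,L)$, and $\mathrm{dist}_{\mathcal{C}(G,L)}$ is the graph distance. *)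

theory Defs
  imports Complex_Main
begin

text \<open>A graph is given by a vertex set V and a symmetric irreflexive adjacency
  relation E. Colourings are functions on V that are undefined outside V.\<close>

definition L_colouring :: "'v set \<Rightarrow> ('v \<Rightarrow> 'v \<Rightarrow> bool) \<Rightarrow> ('v \<Rightarrow> 'c set) \<Rightarrow> ('v \<Rightarrow> 'c) \<Rightarrow> bool" where
  "L_colouring V E L \<phi> \<longleftrightarrow>
     (\<forall>v\<in>V. \<phi> v \<in> L v) \<and>
     (\<forall>u\<in>V. \<forall>v\<in>V. E u v \<longrightarrow> \<phi> u \<noteq> \<phi> v) \<and>
     (\<forall>v. v \<notin> V \<longrightarrow> \<phi> v = undefined)"

definition frozen_vertex :: "'v set \<Rightarrow> ('v \<Rightarrow> 'v \<Rightarrow> bool) \<Rightarrow> ('v \<Rightarrow> 'c set) \<Rightarrow> ('v \<Rightarrow> 'c) \<Rightarrow> 'v \<Rightarrow> bool" where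
  "frozen_vertex V E L \<phi> v \<longleftrightarrow> (\<forall>c \<in> L v - {\<phi> v}. \<exists>u\<in>V. E v u \<and> \<phi> u = c)"

definition frozen_colouring :: "'v set \<Rightarrow> ('v \<Rightarrow> 'v \<Rightarrow> bool) \<Rightarrow> ('v \<Rightarrow> 'c set) \<Rightarrow> ('v \<Rightarrow> 'c) \<Rightarrow> bool" where
  "frozen_colouring V E L \<phi> \<longleftrightarrow> (\<forall>v\<in>V. frozen_vertex V E L \<phi> v)"

definition recol_edges :: "'v set \<Rightarrow> ('v \<Rightarrow> 'v \<Rightarrow> bool) \<Rightarrow> ('v \<Rightarrow> 'c set) \<Rightarrow> (('v \<Rightarrow> 'c) \<times> ('v \<Rightarrow> 'c)) set" where
  "recol_edges V E L = {(\<alpha>, \<beta>). L_colouring V E L \<alpha> \<and> L_colouring V E L \<beta> \<and>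
      (\<exists>v\<in>V. \<alpha> v \<noteq> \<beta> v \<and> (\<forall>u. u \<noteq> v \<longrightarrow> \<alpha> u = \<beta> u))}"

definition recol_equiv :: "'v set \<Rightarrow> ('v \<Rightarrow> 'v \<Rightarrow> bool) \<Rightarrow> ('v \<Rightarrow> 'c set) \<Rightarrow> ('v \<Rightarrow> 'c) \<Rightarrow> ('v \<Rightarrow> 'c) \<Rightarrow> bool" where
  "recol_equiv V E L \<alpha> \<beta> \<longleftrightarrow> (\<alpha>, \<beta>) \<in> (recol_edges V E L)\<^sup>*"

text \<open>Graph distance in C(G,L) (meaningful when the colourings are in the same component).\<close>
definition recol_dist :: "'v set \<Rightarrow> ('v \<Rightarrow> 'v \<Rightarrow> bool) \<Rightarrow> ('v \<Rightarrow> 'c set) \<Rightarrow> ('v \<Rightarrow> 'c) \<Rightarrow> ('v \<Rightarrow> 'c) \<Rightarrow> nat" where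
  "recol_dist V E L \<alpha> \<beta> = (LEAST k. (\<alpha>, \<beta>) \<in> (recol_edges V E L) ^^ k)"

definition complete_adj :: "'v \<Rightarrow> 'v \<Rightarrow> bool" where
  "complete_adj u v \<longleftrightarrow> u \<noteq> v"

end

theory Submission
  imports Defs
begin

(* On a complete graph an L-colouring is an injective choice from the lists. If the union
   of the lists has only n colours, every list is that union and every colouring uses all
   of it, so no vertex can change colour.

   Otherwise, to go from a to b, measure progress by the potential 2|D| + |B|, where D is
   the set of vertices on which a and b disagree and B, the blocked ones, are those whose
   target colour is held by another vertex. An unblocked vertex is recoloured directly.
   If all of D is blocked, a and b use the same colours; a vertex v of D with a list colour
   unused by b moves to it, after which the vertex u with b u = a v takes its target
   colour, unblocking u and the vertex t with b t = a u. Either way every recolouring lowers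
   the potential by at least 2. If neither move applies, every list of a vertex of D
   equals b(V); recolouring a vertex w that has a list colour outside b(V) in both a and b
   frees b w for all of them at the cost of two extra steps. As the potential is at most
   3n, the distance is at most 3n/2 + 2. *)

lemma relpow_potential_descent:
  fixes f :: "'a \<Rightarrow> nat"
  assumes step: "\<And>x. P x \<Longrightarrow> (\<exists>k. (x, y) \<in> R ^^ k \<and> 2 * k \<le> f x) \<or>
      (\<exists>x' j. P x' \<and> 0 < j \<and> (x, x') \<in> R ^^ j \<and> f x' + 2 * j \<le> f x)"
  shows "P x \<Longrightarrow> \<exists>k. (x, y) \<in> R ^^ k \<and> 2 * k \<le> f x"
proof (induction "f x" arbitrary: x rule: less_induct)
  case less
  from step[OF less.prems] show ?case
  proof
    assume "\<exists>x' j. P x' \<and> 0 < j \<and> (x, x') \<in> R ^^ j \<and> f x' + 2 * j \<le> f x"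
    then obtain x' j where x': "P x'" "0 < j" "(x, x') \<in> R ^^ j" "f x' + 2 * j \<le> f x"
      by blast
    then obtain k where k: "(x', y) \<in> R ^^ k" "2 * k \<le> f x'" using less.hyps[of x'] by auto
    have "(x, y) \<in> R ^^ (j + k)" using relpow_trans[OF x'(3) k(1)] .
    then show ?thesis using x'(4) k(2) by (intro exI[of _ "j + k"]) simp
  qed
qed

locale complete_graph_lists =
  fixes V :: "'v set" and L :: "'v \<Rightarrow> 'c set"
  assumes finite_V: "finite V"
begin

abbreviation colouring :: "('v \<Rightarrow> 'c) \<Rightarrow> bool" where
  "colouring \<equiv> L_colouring V complete_adj L"

abbreviation recol :: "(('v \<Rightarrow> 'c) \<times> ('v \<Rightarrow> 'c)) set" where
  "recol \<equiv> recol_edges V complete_adj L"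

definition disagreements :: "('v \<Rightarrow> 'c) \<Rightarrow> ('v \<Rightarrow> 'c) \<Rightarrow> 'v set" where
  "disagreements a b = {v \<in> V. a v \<noteq> b v}"

definition blocked :: "('v \<Rightarrow> 'c) \<Rightarrow> ('v \<Rightarrow> 'c) \<Rightarrow> 'v set" where
  "blocked a b = {v \<in> disagreements a b. \<exists>w \<in> V - {v}. a w = b v}"

definition potential :: "('v \<Rightarrow> 'c) \<Rightarrow> ('v \<Rightarrow> 'c) \<Rightarrow> nat" where
  "potential a b = 2 * card (disagreements a b) + card (blocked a b)"

lemma colouring_iff:
  "colouring \<phi> \<longleftrightarrow> (\<forall>v\<in>V. \<phi> v \<in> L v) \<and> inj_on \<phi> V \<and> (\<forall>v. v \<notin> V \<longrightarrow> \<phi> v = undefined)"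
  unfolding L_colouring_def complete_adj_def inj_on_def by blast

lemma colouring_inj_on: "colouring \<phi> \<Longrightarrow> inj_on \<phi> V"
  by (simp add: colouring_iff)

lemma colouring_in_list: "colouring \<phi> \<Longrightarrow> v \<in> V \<Longrightarrow> \<phi> v \<in> L v"
  by (simp add: colouring_iff)

lemma card_image_colouring: "colouring \<phi> \<Longrightarrow> card (\<phi> ` V) = card V"
  by (simp add: card_image colouring_inj_on)

lemma colouring_upd:
  assumes a: "colouring a" and v: "v \<in> V" "c \<in> L v" and fresh: "c \<notin> a ` (V - {v})"
  shows "colouring (a(v := c))"
proof -
  have "inj_on (a(v := c)) V"
  proof (rule inj_onI)
    fix x y assume "x \<in> V" "y \<in> V" "(a(v := c)) x = (a(v := c)) y"
    then show "x = y"
      using inj_onD[OF colouring_inj_on[OF a]] fresh by (cases "x = v"; cases "y = v") auto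
  qed
  then show ?thesis using a v by (auto simp: colouring_iff)
qed

lemma recol_upd:
  assumes "colouring a" "v \<in> V" "c \<in> L v" "c \<notin> a ` (V - {v})" "a v \<noteq> c"
  shows "(a, a(v := c)) \<in> recol"
  using assms colouring_upd[OF assms(1-4)] unfolding recol_edges_def by (auto intro!: bexI[of _ v])

lemma recol_upd_unused:
  assumes "colouring a" "v \<in> V" "c \<in> L v" "c \<notin> a ` V"
  shows "colouring (a(v := c))" "(a, a(v := c)) \<in> recol"
proof -
  have "c \<notin> a ` (V - {v})" "a v \<noteq> c" using assms(2,4) by auto
  then show "colouring (a(v := c))" "(a, a(v := c)) \<in> recol"
    using colouring_upd recol_upd assms(1-3) by auto
qed

lemma recol_sym: "(a, a') \<in> recol \<Longrightarrow> (a', a) \<in> recol"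
  unfolding recol_edges_def by (clarsimp, metis)

lemma disagreements_subset: "disagreements a b \<subseteq> V"
  by (auto simp: disagreements_def)

lemma blocked_subset: "blocked a b \<subseteq> disagreements a b"
  by (auto simp: blocked_def)

lemma finite_disagreements: "finite (disagreements a b)"
  using finite_V disagreements_subset by (rule finite_subset[rotated])

lemma finite_blocked: "finite (blocked a b)"
  using finite_disagreements blocked_subset by (rule finite_subset[rotated])

lemma potential_le: "potential a b \<le> 3 * card V"
proof -
  have "card (disagreements a b) \<le> card V" "card (blocked a b) \<le> card V"
    using card_mono[OF finite_V] disagreements_subset blocked_subset by (meson order_trans)+
  then show ?thesis by (simp add: potential_def)
qed

lemma colouring_eqI:
  assumes "colouring a" "colouring b" "disagreements a b = {}"
  shows "a = b"
proof
  fix x show "a x = b x"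
    using assms unfolding colouring_iff disagreements_def by (cases "x \<in> V") auto
qed

lemma image_eq_if_all_blocked:
  assumes a: "colouring a" and b: "colouring b" and all_blocked: "disagreements a b \<subseteq> blocked a b"
  shows "a ` V = b ` V"
proof -
  have "b x \<in> a ` V" if "x \<in> V" for x
  proof (cases "a x = b x")
    case True
    then show ?thesis using that by (metis imageI)
  next
    case False
    then have "x \<in> blocked a b" using that all_blocked by (auto simp: disagreements_def)
    then show ?thesis by (force simp: blocked_def)
  qed
  then have "b ` V \<subseteq> a ` V" by blast
  moreover have "card (a ` V) = card (b ` V)" using a b by (simp add: card_image_colouring)
  ultimately show ?thesis using finite_V by (metis card_subset_eq finite_imageI)
qed

lemma preimage_of_disagreeing_colour:
  assumes a: "colouring a" and b: "colouring b"
    and v: "v \<in> disagreements a b" and u: "u \<in> V" "b u = a v"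
  shows "u \<in> disagreements a b" "u \<noteq> v"
proof -
  show "u \<noteq> v" using u v by (auto simp: disagreements_def)
  then have "a u \<noteq> a v"
    using u v colouring_inj_on[OF a] by (auto simp: disagreements_def inj_on_def)
  then show "u \<in> disagreements a b" using u by (simp add: disagreements_def)
qed

lemma potential_decrease:
  assumes "u \<in> disagreements a b" "disagreements a' b = disagreements a b - {u}"
    and "S \<subseteq> blocked a b" "blocked a' b \<subseteq> blocked a b - S"
  shows "potential a' b + 2 + card S \<le> potential a b"
proof -
  have "finite S" using assms(3) finite_blocked by (rule finite_subset)
  then have "card (blocked a b - S) = card (blocked a b) - card S"
    using assms(3) by (rule card_Diff_subset)
  moreover have "card S \<le> card (blocked a b)" using assms(3) finite_blocked by (rule card_mono[rotated])
  moreover have "card (blocked a' b) \<le> card (blocked a b - S)"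
    using assms(4) finite_blocked by (simp add: card_mono)
  ultimately have "card (blocked a' b) + card S \<le> card (blocked a b)" by linarith
  moreover have "card (disagreements a' b) + 1 = card (disagreements a b)"
    using assms(1,2) card_Suc_Diff1[OF finite_disagreements] by simp
  ultimately show ?thesis by (simp add: potential_def)
qed

lemma recolour_unblocked:
  assumes a: "colouring a" and b: "colouring b"
    and v: "v \<in> disagreements a b" "v \<notin> blocked a b"
  defines "a' \<equiv> a(v := b v)"
  shows "colouring a'" "(a, a') \<in> recol" "disagreements a' b \<subseteq> disagreements a b"
    "potential a' b + 2 \<le> potential a b"
proof -
  have vV: "v \<in> V" and ne: "a v \<noteq> b v" and free: "b v \<notin> a ` (V - {v})"
    using v by (auto simp: disagreements_def blocked_def)
  show "colouring a'" "(a, a') \<in> recol"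
    unfolding a'_def using colouring_upd recol_upd a vV colouring_in_list[OF b vV] free ne by auto
  have D: "disagreements a' b = disagreements a b - {v}"
    by (auto simp: a'_def disagreements_def)
  then show "disagreements a' b \<subseteq> disagreements a b" by blast
  have "blocked a' b \<subseteq> blocked a b"
  proof
    fix x assume "x \<in> blocked a' b"
    then obtain w where x: "x \<in> disagreements a b" "x \<noteq> v" and w: "w \<in> V" "w \<noteq> x" "a' w = b x"
      using D by (auto simp: blocked_def)
    have xV: "x \<in> V" using x(1) disagreements_subset by blast
    have "w \<noteq> v"
    proof
      assume "w = v"
      then have "b v = b x" using w by (simp add: a'_def)
      then show False using inj_onD[OF colouring_inj_on[OF b] _ vV xV] x(2) by blast
    qed
    then have "a w = b x" using w by (simp add: a'_def)
    then show "x \<in> blocked a b" using x w by (auto simp: blocked_def)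
  qed
  then show "potential a' b + 2 \<le> potential a b"
    using potential_decrease[OF v(1) D, of "{}"] by simp
qed

lemma recolour_through_fresh_colour:
  assumes a: "colouring a" and b: "colouring b"
    and v: "v \<in> disagreements a b" and c: "c \<in> L v" "c \<notin> a ` V"
    and u: "u \<in> V" "b u = a v"
  defines "a' \<equiv> a(v := c, u := b u)"
  shows "colouring a'" "(a, a') \<in> recol ^^ 2"
proof -
  have vV: "v \<in> V" using v disagreements_subset by blast
  have uD: "u \<in> disagreements a b" and uv: "u \<noteq> v"
    using preimage_of_disagreeing_colour[OF a b v u] by auto
  define a1 where "a1 = a(v := c)"
  have a1: "colouring a1" "(a, a1) \<in> recol" unfolding a1_def using recol_upd_unused a vV c by auto
  have "b u \<notin> a1 ` (V - {u})"
  proof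
    assume "b u \<in> a1 ` (V - {u})"
    then obtain x where x: "x \<in> V" "x \<noteq> u" "a1 x = a v" using u(2) by (metis DiffE imageE singletonI)
    show False
    proof (cases "x = v")
      case True then show False using x c vV by (auto simp: a1_def)
    next
      case False then show False using x inj_onD[OF colouring_inj_on[OF a] _ x(1) vV] by (simp add: a1_def)
    qed
  qed
  moreover have "a1 u \<noteq> b u" using uD uv by (simp add: a1_def disagreements_def)
  moreover have "a' = a1(u := b u)" by (simp add: a'_def a1_def)
  ultimately have a': "colouring a'" "(a1, a') \<in> recol"
    using colouring_upd recol_upd a1(1) u(1) colouring_in_list[OF b u(1)] by auto
  then show "colouring a'" by simp
  show "(a, a') \<in> recol ^^ 2"
    using relpow_Suc_I2[of a a1 recol a' 1] a1(2) a'(2) by (simp add: numeral_2_eq_2)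
qed

lemma potential_after_fresh_colour:
  assumes a: "colouring a" and b: "colouring b"
    and all_blocked: "disagreements a b \<subseteq> blocked a b"
    and v: "v \<in> disagreements a b" and c: "c \<notin> a ` V"
    and u: "u \<in> V" "b u = a v"
  defines "a' \<equiv> a(v := c, u := b u)"
  shows "disagreements a' b \<subseteq> disagreements a b" "potential a' b + 4 \<le> potential a b"
proof -
  have vV: "v \<in> V" using v disagreements_subset by blast
  have uD: "u \<in> disagreements a b" and uv: "u \<noteq> v"
    using preimage_of_disagreeing_colour[OF a b v u] by auto
  have same_image: "a ` V = b ` V" using image_eq_if_all_blocked[OF a b all_blocked] .
  have "c \<noteq> b v" using c same_image vV by auto
  then have D: "disagreements a' b = disagreements a b - {u}"
    using uv v by (auto simp: a'_def disagreements_def)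
  then show "disagreements a' b \<subseteq> disagreements a b" by blast
  obtain t where t: "t \<in> V" "b t = a u" using same_image u(1) by (metis imageE imageI)
  have tD: "t \<in> disagreements a b" and tu: "t \<noteq> u"
    using preimage_of_disagreeing_colour[OF a b uD t] by auto
  have avu: "a v \<noteq> a u" using inj_onD[OF colouring_inj_on[OF a] _ u(1) vV] uv by metis
  txt \<open>Only u held the colour a u = b t, and it has given it up, so t is no longer blocked.\<close>
  have "blocked a' b \<subseteq> blocked a b - {u, t}"
  proof
    fix x assume x: "x \<in> blocked a' b"
    then have "x \<in> blocked a b" "x \<noteq> u" using D blocked_subset all_blocked by blast+
    moreover have "x \<noteq> t"
    proof
      assume "x = t"
      then obtain w where w: "w \<in> V" "w \<noteq> t" "a' w = a u"
        using x t(2) by (auto simp: blocked_def)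
      then show False
        using inj_onD[OF colouring_inj_on[OF a] _ w(1) u(1)] avu c u uv
        by (cases "w = u"; cases "w = v") (auto simp: a'_def)
    qed
    ultimately show "x \<in> blocked a b - {u, t}" by blast
  qed
  then show "potential a' b + 4 \<le> potential a b"
    using potential_decrease[OF uD D, of "{u, t}"] tu uD tD all_blocked by (simp add: subset_iff)
qed

lemma improving_move:
  assumes a: "colouring a" and b: "colouring b"
    and v: "v \<in> disagreements a b" "v \<notin> blocked a b \<or> \<not> L v \<subseteq> b ` V"
  shows "\<exists>a' j. colouring a' \<and> 0 < j \<and> (a, a') \<in> recol ^^ j \<and>
    disagreements a' b \<subseteq> disagreements a b \<and> potential a' b + 2 * j \<le> potential a b"
proof (cases "disagreements a b \<subseteq> blocked a b")
  case True
  then have same_image: "a ` V = b ` V" by (rule image_eq_if_all_blocked[OF a b])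
  obtain c where c: "c \<in> L v" "c \<notin> a ` V" using v True same_image by blast
  obtain u where u: "u \<in> V" "b u = a v"
    using same_image v(1) disagreements_subset by (metis imageE imageI subsetD)
  show ?thesis
    using recolour_through_fresh_colour[OF a b v(1) c u]
      potential_after_fresh_colour[OF a b True v(1) c(2) u]
    by (intro exI[of _ "a(v := c, u := b u)"] exI[of _ 2]) simp
next
  case False
  then obtain w where "w \<in> disagreements a b" "w \<notin> blocked a b" by blast
  from recolour_unblocked[OF a b this] show ?thesis
    by (intro exI[of _ "a(w := b w)"] exI[of _ 1]) simp
qed

lemma recol_path_if_spare_colours:
  assumes b: "colouring b" and a: "colouring a"
    and spare: "\<forall>v\<in>disagreements a b. \<not> L v \<subseteq> b ` V"
  shows "\<exists>k. (a, b) \<in> recol ^^ k \<and> 2 * k \<le> potential a b"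
proof -
  let ?P = "\<lambda>a. colouring a \<and> (\<forall>v\<in>disagreements a b. \<not> L v \<subseteq> b ` V)"
  have "(\<exists>k. (x, b) \<in> recol ^^ k \<and> 2 * k \<le> potential x b) \<or>
    (\<exists>x' j. ?P x' \<and> 0 < j \<and> (x, x') \<in> recol ^^ j \<and> potential x' b + 2 * j \<le> potential x b)"
    if x: "?P x" for x
  proof (cases "disagreements x b = {}")
    case True
    then have "x = b" using colouring_eqI x b by blast
    then show ?thesis by (intro disjI1 exI[of _ 0]) simp
  next
    case False
    then obtain v where v: "v \<in> disagreements x b" by blast
    then obtain x' j where x': "colouring x'" "0 < j" "(x, x') \<in> recol ^^ j"
      "disagreements x' b \<subseteq> disagreements x b" "potential x' b + 2 * j \<le> potential x b"
      using improving_move[OF _ b v] x by blast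
    then have "?P x'" using x by blast
    then show ?thesis using x' by blast
  qed
  from relpow_potential_descent[where P = ?P, OF this] show ?thesis using a spare by blast
qed

lemma list_eq_image_if_subset:
  assumes b: "colouring b" and "card V \<le> card (L v)" "L v \<subseteq> b ` V"
  shows "L v = b ` V"
  using assms finite_V card_image_colouring[OF b] by (metis card_seteq finite_imageI)

lemma potential_upd_common_le:
  assumes "a w = b w" "c \<notin> b ` V"
  shows "potential (a(w := c)) (b(w := c)) \<le> potential a b"
proof -
  have D: "disagreements (a(w := c)) (b(w := c)) = disagreements a b"
    using assms(1) by (auto simp: disagreements_def)
  have "blocked (a(w := c)) (b(w := c)) \<subseteq> blocked a b"
  proof
    fix x assume "x \<in> blocked (a(w := c)) (b(w := c))"
    then have x: "x \<in> disagreements a b" and "\<exists>u\<in>V - {x}. (a(w := c)) u = (b(w := c)) x"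
      unfolding blocked_def D by auto
    moreover have "x \<noteq> w" "x \<in> V" using x assms(1) by (auto simp: disagreements_def)
    ultimately obtain u where u: "u \<in> V - {x}" "(a(w := c)) u = b x" by auto
    have "u \<noteq> w" using u assms(2) \<open>x \<in> V\<close> by auto
    then show "x \<in> blocked a b" using x u by (auto simp: blocked_def)
  qed
  then show ?thesis using D finite_blocked by (simp add: potential_def card_mono)
qed

lemma recol_path_through_recoloured_target:
  assumes a: "colouring a" and b: "colouring b"
    and deg: "\<forall>v\<in>V. card V \<le> card (L v)"
    and w: "w \<in> V" "c \<in> L w" "c \<notin> b ` V"
    and all_blocked: "disagreements a b \<subseteq> blocked a b"
    and lists: "\<forall>v\<in>disagreements a b. L v \<subseteq> b ` V"
  shows "\<exists>k. (a, b) \<in> recol ^^ k \<and> 2 * k \<le> potential a b + 4"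
proof -
  have "w \<notin> disagreements a b" using lists w(2,3) by blast
  then have aw: "a w = b w" using w(1) by (simp add: disagreements_def)
  have "c \<notin> a ` V" using w(3) image_eq_if_all_blocked[OF a b all_blocked] by simp
  then have a': "colouring (a(w := c))" "(a, a(w := c)) \<in> recol"
    using recol_upd_unused a w(1,2) by auto
  have b': "colouring (b(w := c))" "(b(w := c), b) \<in> recol"
    using recol_upd_unused[OF b w] recol_sym by auto
  txt \<open>Recolouring w in both colourings keeps the potential and frees b w, which lies in
    every list L v = b ` V of a disagreeing vertex.\<close>
  have "b w \<notin> (b(w := c)) ` V"
    using inj_onD[OF colouring_inj_on[OF b] _ _ w(1)] w(3) by auto
  moreover have "b w \<in> L v" if "v \<in> disagreements a b" for v
    using that list_eq_image_if_subset[OF b] deg lists w(1) disagreements_subset by blast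
  ultimately have "\<forall>v\<in>disagreements (a(w := c)) (b(w := c)). \<not> L v \<subseteq> (b(w := c)) ` V"
    by (auto simp: disagreements_def split: if_splits)
  then obtain k where k: "(a(w := c), b(w := c)) \<in> recol ^^ k"
    "2 * k \<le> potential (a(w := c)) (b(w := c))"
    using recol_path_if_spare_colours[OF b'(1) a'(1)] by blast
  then have "(a, b) \<in> recol ^^ (1 + k + 1)"
    using relpow_trans[OF relpow_trans[OF _ k(1)]] a'(2) b'(2) by (metis relpow_1)
  then show ?thesis
    using k(2) potential_upd_common_le[of a w b c, OF aw w(3)] by (intro exI[of _ "1 + k + 1"]) simp
qed

lemma recol_path_if_fresh_colour:
  assumes b: "colouring b" and a: "colouring a"
    and deg: "\<forall>v\<in>V. card V \<le> card (L v)"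
    and w: "w \<in> V" "c \<in> L w" "c \<notin> b ` V"
  shows "\<exists>k. (a, b) \<in> recol ^^ k \<and> 2 * k \<le> potential a b + 4"
proof -
  have "(\<exists>k. (x, b) \<in> recol ^^ k \<and> 2 * k \<le> potential x b + 4) \<or>
    (\<exists>x' j. colouring x' \<and> 0 < j \<and> (x, x') \<in> recol ^^ j \<and>
      potential x' b + 4 + 2 * j \<le> potential x b + 4)"
    if x: "colouring x" for x
  proof (cases "\<exists>v\<in>disagreements x b. v \<notin> blocked x b \<or> \<not> L v \<subseteq> b ` V")
    case True
    then obtain v where "v \<in> disagreements x b" "v \<notin> blocked x b \<or> \<not> L v \<subseteq> b ` V" by blast
    from improving_move[OF x b this] show ?thesis by auto
  next
    case False
    then have "disagreements x b \<subseteq> blocked x b" "\<forall>v\<in>disagreements x b. L v \<subseteq> b ` V" by auto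
    from recol_path_through_recoloured_target[OF x b deg w this] show ?thesis ..
  qed
  from relpow_potential_descent[where P = colouring, OF this] show ?thesis using a by blast
qed

lemma fresh_colour_exists:
  assumes deg: "\<forall>v\<in>V. card V \<le> card (L v)" and card_Union: "card (\<Union>v\<in>V. L v) \<noteq> card V"
    and b: "colouring b"
  shows "\<exists>w\<in>V. \<exists>c\<in>L w. c \<notin> b ` V"
proof (rule ccontr)
  assume "\<not> ?thesis"
  then have sub: "(\<Union>v\<in>V. L v) \<subseteq> b ` V" by blast
  then have finite_Union: "finite (\<Union>v\<in>V. L v)"
    using finite_V by (meson finite_imageI finite_subset)
  have "card (\<Union>v\<in>V. L v) \<le> card V"
    using card_mono[OF finite_imageI[OF finite_V] sub] card_image_colouring[OF b] by simp
  moreover have "V \<noteq> {}"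
  proof
    assume "V = {}"
    then show False using card_Union by simp
  qed
  then obtain v where v: "v \<in> V" by blast
  moreover have "card (L v) \<le> card (\<Union>v\<in>V. L v)"
    using v by (intro card_mono[OF finite_Union]) blast
  ultimately show False using card_Union deg[rule_format, OF v] by linarith
qed

lemma recol_equiv_and_dist_le:
  assumes deg: "\<forall>v\<in>V. card V \<le> card (L v)" and "card (\<Union>v\<in>V. L v) \<noteq> card V"
    and a: "colouring a" and b: "colouring b"
  shows "recol_equiv V complete_adj L a b" "2 * recol_dist V complete_adj L a b \<le> 3 * card V + 4"
proof -
  obtain w c where "w \<in> V" "c \<in> L w" "c \<notin> b ` V" using fresh_colour_exists[OF assms(1,2) b] by blast
  then obtain k where k: "(a, b) \<in> recol ^^ k" "2 * k \<le> potential a b + 4"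
    using recol_path_if_fresh_colour[OF b a deg] by blast
  show "recol_equiv V complete_adj L a b"
    using k(1) unfolding recol_equiv_def by (rule relpow_imp_rtrancl)
  have "recol_dist V complete_adj L a b \<le> k"
    unfolding recol_dist_def using k(1) by (rule Least_le)
  then show "2 * recol_dist V complete_adj L a b \<le> 3 * card V + 4"
    using k(2) potential_le[of a b] by linarith
qed

lemma list_eq_Union:
  assumes deg: "\<forall>v\<in>V. card V \<le> card (L v)" and card_Union: "card (\<Union>v\<in>V. L v) = card V"
    and v: "v \<in> V"
  shows "L v = (\<Union>v\<in>V. L v)"
proof -
  have "card V > 0" using v finite_V card_gt_0_iff by blast
  then have "finite (\<Union>v\<in>V. L v)" using card_Union card_ge_0_finite by metis
  moreover have "L v \<subseteq> (\<Union>v\<in>V. L v)" using v by blast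
  moreover have "card (\<Union>v\<in>V. L v) \<le> card (L v)" using deg v card_Union by simp
  ultimately show ?thesis by (rule card_seteq)
qed

lemma frozen_if_card_Union_eq:
  assumes deg: "\<forall>v\<in>V. card V \<le> card (L v)" and card_Union: "card (\<Union>v\<in>V. L v) = card V"
    and \<phi>: "colouring \<phi>"
  shows "frozen_colouring V complete_adj L \<phi>"
  unfolding frozen_colouring_def frozen_vertex_def
proof (intro ballI)
  fix v c assume v: "v \<in> V" and c: "c \<in> L v - {\<phi> v}"
  have Lv: "L v = (\<Union>v\<in>V. L v)" using list_eq_Union[OF deg card_Union v] .
  then have card_Lv: "card (L v) = card V" using card_Union by simp
  then have "finite (L v)" using v finite_V card_gt_0_iff by force
  moreover have "\<phi> ` V \<subseteq> L v" using Lv colouring_in_list[OF \<phi>] by blast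
  ultimately have "\<phi> ` V = L v" using card_Lv card_image_colouring[OF \<phi>] by (simp add: card_seteq)
  then obtain u where "u \<in> V" "\<phi> u = c" using c by (metis DiffD1 imageE)
  then show "\<exists>u\<in>V. complete_adj v u \<and> \<phi> u = c" using c by (auto simp: complete_adj_def)
qed

end

theorem mainTheorem17:
  fixes V :: "'v set" and L :: "'v \<Rightarrow> 'c set" and n :: nat
  assumes "finite V" and "card V = n" and "n \<ge> 2"
    and "\<forall>v\<in>V. card (L v) \<ge> n"
  shows "(card (\<Union>v\<in>V. L v) = n \<longrightarrow>
            (\<forall>u\<in>V. \<forall>v\<in>V. L u = L v) \<and>
            (\<forall>\<phi>. L_colouring V complete_adj L \<phi> \<longrightarrow> frozen_colouring V complete_adj L \<phi>))
       \<and> (card (\<Union>v\<in>V. L v) \<noteq> n \<longrightarrow>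
            (\<forall>\<alpha> \<beta>. L_colouring V complete_adj L \<alpha> \<and> L_colouring V complete_adj L \<beta> \<longrightarrow>
               recol_equiv V complete_adj L \<alpha> \<beta> \<and>
               real (recol_dist V complete_adj L \<alpha> \<beta>) \<le> 3 * real n / 2 + 2))"
proof -
  interpret complete_graph_lists V L using assms(1) by unfold_locales
  have deg: "\<forall>v\<in>V. card V \<le> card (L v)" using assms(2,4) by simp
  have lists_eq: "\<forall>u\<in>V. \<forall>v\<in>V. L u = L v" if "card (\<Union>v\<in>V. L v) = card V"
    using list_eq_Union[OF deg that] by metis
  have dist_le: "real (recol_dist V complete_adj L \<alpha> \<beta>) \<le> 3 * real n / 2 + 2"
    if "card (\<Union>v\<in>V. L v) \<noteq> card V" "colouring \<alpha>" "colouring \<beta>" for \<alpha> \<beta>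
  proof -
    have "2 * recol_dist V complete_adj L \<alpha> \<beta> \<le> 3 * n + 4"
      using recol_equiv_and_dist_le(2)[OF deg that] assms(2) by simp
    then have "real (2 * recol_dist V complete_adj L \<alpha> \<beta>) \<le> real (3 * n + 4)"
      by (rule of_nat_mono)
    then show ?thesis by simp
  qed
  show ?thesis
    using lists_eq frozen_if_card_Union_eq[OF deg] recol_equiv_and_dist_le(1)[OF deg] dist_le
    unfolding assms(2) by blast
qed

end
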